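(* Let $K$ be a field of characteristic zero, $n\ge 1$, and $M=\mathrm{Mat}(n,K)$. Let $U\subset \mathrm{GL}(n,K)$ be the group of upper triangular matrices with all diagonal entries equal to $1$, acting on the polynomial ring $K[M]$ by $(\rho_g f)(A)=f(g^{-1}Ag)$. For every $1\le k\le n$ and $0\le i\le k-1$, the polynomial $J_{k,i}\in K[M]$ (defined in the context) is $U$-invariant, i.e. $\rho_u J_{k,i}=J_{k,i}$ for all $u\in U$.
   Context: Let $\{x_{ij}\}_{1\le i,j\le n}$ be the standard coordinate functions on $M$, let $X=(x_{ij})$ be the generic matrix and $X^*=(x^*_{ij})$ its adjugate matrix, so $XX^*=X^*X=\det X\cdot E$ (entries of $X^*$ are polynomials in the $x_{ij}$). For $1\le k\le n$ and $0\le i\le k-1$, $J_{k,i}$ is the determinant of the $k\times k$ matrix whose first $k-i$ rows are the rows $n-k+i+1,\dots,n$ of $X$ restricted to columns $1,\dots,k$, and whose last $i$ rows are the rows $n-i+1,\dots,n$ of $X^*$ restricted to columns $1,\dots,k$. In particular $J_{k,0}$ is the lower-left corner $k\times k$ minor of $X$ (rows $n-k+1,\dots,n$, columns $1,\dots,k$). *)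

theory Defs
  imports "Jordan_Normal_Form.Determinant"
begin

definition unitriangular_upper :: "nat \<Rightarrow> 'a::field mat set" where
  "unitriangular_upper n = {u \<in> carrier_mat n n.
     (\<forall>i<n. u $$ (i,i) = 1) \<and> (\<forall>i<n. \<forall>j<i. u $$ (i,j) = 0)}"

text \<open>J_{k,i}(X) for an n x n matrix X (0-indexed rows/columns):
  first k-i rows are rows n-k+i+1..n of X (1-indexed), last i rows are rows
  n-i+1..n of the adjugate X*, all restricted to columns 1..k.\<close>
definition J_poly :: "nat \<Rightarrow> nat \<Rightarrow> nat \<Rightarrow> 'a::field mat \<Rightarrow> 'a" where
  "J_poly n k i X = det (mat k k (\<lambda>(r,c).
      if r < k - i then X $$ (n - k + i + r, c)
      else adj_mat X $$ (n - i + (r - (k - i)), c)))"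

definition rho :: "'a::field mat \<Rightarrow> 'a mat \<Rightarrow> ('a mat \<Rightarrow> 'b) \<Rightarrow> ('a mat \<Rightarrow> 'b)" where
  "rho g ginv f = (\<lambda>A. f (ginv * A * g))"

end

theory Submission
  imports Defs "Jordan_Normal_Form.Char_Poly"
begin

text \<open>Put \<open>Y = u\<^sup>-\<^sup>1 A u\<close>. Since the adjugate commutes with conjugation,
  \<open>u Y = A u\<close> and \<open>u adj(Y) = adj(A) u\<close>. The matrix defining \<open>J\<^sub>k\<^sub>,\<^sub>i\<close> stacks
  lower-left corners of a matrix and of its adjugate. Because \<open>u\<close> is upper unitriangular,
  the rows of such a corner of \<open>u Y\<close> are combinations of the rows of the corresponding
  corner of \<open>Y\<close> with a unitriangular coefficient block, while the first \<open>k\<close> columns of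
  \<open>A u\<close> only involve the first \<open>k\<close> columns of \<open>A\<close>. Both operations thus multiply the
  stacked matrix by a matrix of determinant 1.\<close>

lemma det_unitriangular_upper:
  fixes U :: "'a::field mat"
  assumes "U \<in> unitriangular_upper n"
  shows "det U = 1"
proof -
  have U: "U \<in> carrier_mat n n" and "upper_triangular U" and "\<forall>i<n. U $$ (i, i) = 1"
    using assms unfolding unitriangular_upper_def upper_triangular_def by auto
  then have "det U = prod_list (diag_mat U)" by (intro det_upper_triangular)
  also have "\<dots> = 1"
    using U \<open>\<forall>i<n. U $$ (i, i) = 1\<close> unfolding prod_list_diag_prod by simp
  finally show ?thesis .
qed

definition upper_left_block :: "nat \<Rightarrow> 'a mat \<Rightarrow> 'a mat" where
  "upper_left_block k U = mat k k (\<lambda>(r, c). U $$ (r, c))"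

definition lower_right_block :: "nat \<Rightarrow> 'a mat \<Rightarrow> 'a mat" where
  "lower_right_block m U = mat m m (\<lambda>(r, c). U $$ (dim_row U - m + r, dim_col U - m + c))"

definition lower_left_block :: "nat \<Rightarrow> nat \<Rightarrow> 'a mat \<Rightarrow> 'a mat" where
  "lower_left_block m k Y = mat m k (\<lambda>(r, c). Y $$ (dim_row Y - m + r, c))"

lemma block_carrier_mat [simp]:
  "upper_left_block k U \<in> carrier_mat k k"
  "lower_right_block m U \<in> carrier_mat m m"
  "lower_left_block m k Y \<in> carrier_mat m k"
  by (simp_all add: upper_left_block_def lower_right_block_def lower_left_block_def)

lemma upper_left_block_unitriangular_upper:
  assumes "U \<in> unitriangular_upper n" and "k \<le> n"
  shows "upper_left_block k U \<in> unitriangular_upper k"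
  using assms unfolding unitriangular_upper_def upper_left_block_def by auto

lemma lower_right_block_unitriangular_upper:
  assumes "U \<in> unitriangular_upper n" and "m \<le> n"
  shows "lower_right_block m U \<in> unitriangular_upper m"
  using assms unfolding unitriangular_upper_def lower_right_block_def by auto

lemma lower_left_block_mult_upper_triangular_right:
  fixes Y U :: "'a::semiring_0 mat"
  assumes Y: "Y \<in> carrier_mat nr n" and U: "U \<in> carrier_mat n n" "upper_triangular U"
    and "m \<le> nr" and "k \<le> n"
  shows "lower_left_block m k (Y * U) = lower_left_block m k Y * upper_left_block k U"
proof (rule eq_matI)
  fix r c assume "r < dim_row (lower_left_block m k Y * upper_left_block k U)"
    and "c < dim_col (lower_left_block m k Y * upper_left_block k U)"
  then have r: "r < m" and c: "c < k"
    by (simp_all add: lower_left_block_def upper_left_block_def)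
  have "(\<Sum>t\<in>{0..<n}. Y $$ (nr - m + r, t) * U $$ (t, c))
      = (\<Sum>t\<in>{0..<k}. Y $$ (nr - m + r, t) * U $$ (t, c))"
    using U c \<open>k \<le> n\<close> by (intro sum.mono_neutral_right) (auto simp: upper_triangular_def)
  then show "lower_left_block m k (Y * U) $$ (r, c)
      = (lower_left_block m k Y * upper_left_block k U) $$ (r, c)"
    using Y U r c \<open>m \<le> nr\<close> \<open>k \<le> n\<close>
    by (simp add: lower_left_block_def upper_left_block_def scalar_prod_def)
qed (simp_all add: lower_left_block_def upper_left_block_def)

lemma lower_left_block_mult_upper_triangular_left:
  fixes Z U :: "'a::semiring_0 mat"
  assumes Z: "Z \<in> carrier_mat n nc" and U: "U \<in> carrier_mat n n" "upper_triangular U"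
    and "m \<le> n" and "k \<le> nc"
  shows "lower_left_block m k (U * Z) = lower_right_block m U * lower_left_block m k Z"
proof (rule eq_matI)
  fix r c assume "r < dim_row (lower_right_block m U * lower_left_block m k Z)"
    and "c < dim_col (lower_right_block m U * lower_left_block m k Z)"
  then have r: "r < m" and c: "c < k"
    by (simp_all add: lower_left_block_def lower_right_block_def)
  define f where "f t = U $$ (n - m + r, t) * Z $$ (t, c)" for t
  have "(\<Sum>t\<in>{0..<n}. f t) = (\<Sum>t\<in>{0 + (n - m)..<m + (n - m)}. f t)"
    using U r \<open>m \<le> n\<close> by (intro sum.mono_neutral_right) (auto simp: upper_triangular_def f_def)
  also have "\<dots> = (\<Sum>s\<in>{0..<m}. f (s + (n - m)))"
    by (rule sum.shift_bounds_nat_ivl)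
  finally show "lower_left_block m k (U * Z) $$ (r, c)
      = (lower_right_block m U * lower_left_block m k Z) $$ (r, c)"
    using Z U r c \<open>m \<le> n\<close> \<open>k \<le> nc\<close>
    by (simp add: lower_left_block_def lower_right_block_def scalar_prod_def f_def add.commute)
qed (simp_all add: lower_left_block_def lower_right_block_def)

lemma append_rows_mult_right:
  fixes A B W :: "'a::semiring_0 mat"
  assumes "A \<in> carrier_mat nr1 n" and "B \<in> carrier_mat nr2 n" and "W \<in> carrier_mat n nc"
  shows "(A * W) @\<^sub>r (B * W) = (A @\<^sub>r B) * W"
  using assms by (intro eq_matI) (auto simp: append_rows_def scalar_prod_def)

lemma append_rows_mult_block_diagonal:
  fixes A B D E :: "'a::semiring_0 mat"
  assumes A: "A \<in> carrier_mat a nc" and B: "B \<in> carrier_mat b nc"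
    and D: "D \<in> carrier_mat a a" and E: "E \<in> carrier_mat b b"
  shows "(D * A) @\<^sub>r (E * B) = four_block_mat D (0\<^sub>m a b) (0\<^sub>m b a) E * (A @\<^sub>r B)"
  unfolding append_rows_def
  using mult_four_block_mat[OF D zero_carrier_mat zero_carrier_mat E A zero_carrier_mat B
      zero_carrier_mat] A B D E
  by simp

lemma append_rows_lower_left_blocks_intertwined:
  fixes U :: "'a::semiring_0 mat"
  assumes U: "U \<in> carrier_mat n n" "upper_triangular U"
    and Y1: "Y1 \<in> carrier_mat n n" and Y2: "Y2 \<in> carrier_mat n n"
    and A1: "A1 \<in> carrier_mat n n" and A2: "A2 \<in> carrier_mat n n"
    and intertwine1: "U * Y1 = A1 * U" and intertwine2: "U * Y2 = A2 * U"
    and k: "a + b = k" "k \<le> n"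
  shows "four_block_mat (lower_right_block a U) (0\<^sub>m a b) (0\<^sub>m b a) (lower_right_block b U)
        * (lower_left_block a k Y1 @\<^sub>r lower_left_block b k Y2)
      = (lower_left_block a k A1 @\<^sub>r lower_left_block b k A2) * upper_left_block k U"
proof -
  have "four_block_mat (lower_right_block a U) (0\<^sub>m a b) (0\<^sub>m b a) (lower_right_block b U)
        * (lower_left_block a k Y1 @\<^sub>r lower_left_block b k Y2)
      = (lower_right_block a U * lower_left_block a k Y1)
        @\<^sub>r (lower_right_block b U * lower_left_block b k Y2)"
    by (rule append_rows_mult_block_diagonal[symmetric]) (rule block_carrier_mat)+
  also have "\<dots> = lower_left_block a k (A1 * U) @\<^sub>r lower_left_block b k (A2 * U)"
    using lower_left_block_mult_upper_triangular_left[OF _ U] Y1 Y2 k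
    by (simp flip: intertwine1 intertwine2)
  also have "\<dots> = (lower_left_block a k A1 * upper_left_block k U)
      @\<^sub>r (lower_left_block b k A2 * upper_left_block k U)"
    using lower_left_block_mult_upper_triangular_right[OF _ U] A1 A2 k by simp
  also have "\<dots> = (lower_left_block a k A1 @\<^sub>r lower_left_block b k A2) * upper_left_block k U"
    by (rule append_rows_mult_right) (rule block_carrier_mat)+
  finally show ?thesis .
qed

lemma det_append_rows_lower_left_blocks_eq:
  fixes U :: "'a::field mat"
  assumes U: "U \<in> unitriangular_upper n"
    and "Y1 \<in> carrier_mat n n" and "Y2 \<in> carrier_mat n n"
    and "A1 \<in> carrier_mat n n" and "A2 \<in> carrier_mat n n"
    and "U * Y1 = A1 * U" and "U * Y2 = A2 * U"
    and k: "a + b = k" "k \<le> n"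
  shows "det (lower_left_block a k Y1 @\<^sub>r lower_left_block b k Y2)
       = det (lower_left_block a k A1 @\<^sub>r lower_left_block b k A2)"
proof -
  define D where "D = four_block_mat (lower_right_block a U) (0\<^sub>m a b) (0\<^sub>m b a) (lower_right_block b U)"
  define W where "W = upper_left_block k U"
  have "U \<in> carrier_mat n n" and "upper_triangular U"
    using U unfolding unitriangular_upper_def upper_triangular_def by auto
  then have DW: "D * (lower_left_block a k Y1 @\<^sub>r lower_left_block b k Y2)
      = (lower_left_block a k A1 @\<^sub>r lower_left_block b k A2) * W"
    unfolding D_def W_def using assms by (intro append_rows_lower_left_blocks_intertwined)
  have "det D = det (lower_right_block a U) * det (lower_right_block b U)"
    unfolding D_def
    by (rule det_four_block_mat_upper_right_zero) (auto simp: lower_right_block_def)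
  also have "\<dots> = 1"
    using det_unitriangular_upper[OF lower_right_block_unitriangular_upper[OF U]] k by simp
  finally have "det D = 1" .
  moreover have "det W = 1"
    unfolding W_def using det_unitriangular_upper[OF upper_left_block_unitriangular_upper[OF U]] k
    by simp
  moreover have "lower_left_block a k Y1 @\<^sub>r lower_left_block b k Y2 \<in> carrier_mat k k"
    and "lower_left_block a k A1 @\<^sub>r lower_left_block b k A2 \<in> carrier_mat k k"
    and "D \<in> carrier_mat k k" and "W \<in> carrier_mat k k"
    using k by (auto simp: D_def W_def)
  ultimately show ?thesis
    using DW det_mult[of D k "lower_left_block a k Y1 @\<^sub>r lower_left_block b k Y2"]
      det_mult[of "lower_left_block a k A1 @\<^sub>r lower_left_block b k A2" k W]
    by simp
qed

lemma adj_mat_conjugate_of_det_nonzero: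
  fixes P Q A :: "'a::idom mat"
  assumes P: "P \<in> carrier_mat n n" and Q: "Q \<in> carrier_mat n n" and A: "A \<in> carrier_mat n n"
    and PQ: "P * Q = 1\<^sub>m n" and QP: "Q * P = 1\<^sub>m n" and "det A \<noteq> 0"
  shows "adj_mat (P * A * Q) = P * adj_mat A * Q"
proof -
  define Y where "Y = P * A * Q"
  define Z where "Z = P * adj_mat A * Q"
  have adjA: "adj_mat A \<in> carrier_mat n n" using adj_mat(1)[OF A] .
  have Y: "Y \<in> carrier_mat n n" and Z: "Z \<in> carrier_mat n n"
    unfolding Y_def Z_def using P A Q adjA by auto
  have adjY: "adj_mat Y \<in> carrier_mat n n" using adj_mat(1)[OF Y] .
  have "det Y = det A"
    unfolding Y_def using P A Q det_mult[OF P Q] PQ by (simp add: det_mult)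
  then have "adj_mat Y * Y * Z = det A \<cdot>\<^sub>m Z"
    using adj_mat(3)[OF Y] Z by (simp add: mult_smult_assoc_mat[OF one_carrier_mat Z])
  moreover have "Y * Z = det A \<cdot>\<^sub>m 1\<^sub>m n"
  proof -
    have "Y * Z = P * (A * (Q * P) * adj_mat A) * Q"
      unfolding Y_def Z_def using P A Q adjA by (simp add: assoc_mult_mat[of _ n n _ n _ n])
    also have "\<dots> = det A \<cdot>\<^sub>m (P * Q)"
      using P Q A QP
      by (simp add: adj_mat(2)[OF A] mult_smult_distrib[OF P one_carrier_mat] mult_smult_assoc_mat[OF P Q])
    finally show ?thesis using PQ by simp
  qed
  then have "adj_mat Y * Y * Z = det A \<cdot>\<^sub>m adj_mat Y"
    using adjY Y Z
    by (simp add: assoc_mult_mat[of _ n n _ n _ n] mult_smult_distrib[OF adjY one_carrier_mat])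
  ultimately have "det A \<cdot>\<^sub>m Z = det A \<cdot>\<^sub>m adj_mat Y" by simp
  have "Z = adj_mat Y"
  proof (rule eq_matI)
    fix i j assume "i < dim_row (adj_mat Y)" "j < dim_col (adj_mat Y)"
    moreover have "(det A \<cdot>\<^sub>m Z) $$ (i, j) = (det A \<cdot>\<^sub>m adj_mat Y) $$ (i, j)"
      using \<open>det A \<cdot>\<^sub>m Z = det A \<cdot>\<^sub>m adj_mat Y\<close> by simp
    ultimately show "Z $$ (i, j) = adj_mat Y $$ (i, j)"
      using Z adjY \<open>det A \<noteq> 0\<close> by simp
  qed (use Z adjY in auto)
  then show ?thesis unfolding Y_def Z_def by simp
qed

lemma (in comm_ring_hom) hom_adj_mat:
  assumes "A \<in> carrier_mat n n"
  shows "adj_mat (mat\<^sub>h A) = mat\<^sub>h (adj_mat A)"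
proof -
  have "mat_delete (mat\<^sub>h A) i j = mat\<^sub>h (mat_delete A i j)" if "i < n" "j < n" for i j
    using assms that by (auto simp: mat_delete_def)
  then show ?thesis
    using assms by (intro eq_matI) (auto simp: adj_mat_def cofactor_def hom_mult hom_power hom_uminus)
qed

text \<open>Reduce to nonzero determinant: conjugate the polynomial matrix \<open>x \<cdot> 1 + A\<close>, whose
  determinant is monic in \<open>x\<close>, and evaluate at \<open>x = 0\<close>.\<close>

lemma adj_mat_conjugate:
  fixes P Q A :: "'a::idom mat"
  assumes P: "P \<in> carrier_mat n n" and Q: "Q \<in> carrier_mat n n" and A: "A \<in> carrier_mat n n"
    and PQ: "P * Q = 1\<^sub>m n" and QP: "Q * P = 1\<^sub>m n"
  shows "adj_mat (P * A * Q) = P * adj_mat A * Q"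
proof -
  interpret const: comm_ring_hom "\<lambda>a::'a. [:a:]" by unfold_locales auto
  have eval: "comm_ring_hom (\<lambda>p::'a poly. poly p 0)" by unfold_locales auto
  define C where "C = map_mat (\<lambda>a::'a. [:a:])"
  define E where "E = map_mat (\<lambda>p::'a poly. poly p 0)"
  have E_mult: "E (M * N) = E M * E N" if "M \<in> carrier_mat n n" "N \<in> carrier_mat n n" for M N
    unfolding E_def using that eval
    by (intro semiring_hom.mat_hom_mult) (auto dest: comm_ring_hom.axioms ring_hom.axioms)
  have E_adj: "E (adj_mat M) = adj_mat (E M)" if "M \<in> carrier_mat n n" for M
    unfolding E_def using comm_ring_hom.hom_adj_mat[OF eval that] by simp
  define X where "X = char_poly_matrix (- A)"
  have X: "X \<in> carrier_mat n n" and "det X \<noteq> 0"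
    using degree_monic_char_poly[of "- A" n] A by (auto simp: X_def char_poly_def)
  have CP: "C P \<in> carrier_mat n n" and CQ: "C Q \<in> carrier_mat n n"
    unfolding C_def using P Q by auto
  have E_C: "E (C M) = M" for M by (auto simp: E_def C_def)
  have E_X: "E X = A" using A by (auto simp: E_def X_def char_poly_matrix_def)
  have "adj_mat (P * A * Q) = adj_mat (E (C P * X * C Q))"
    using CP X CQ assoc_mult_mat[OF P A Q] by (simp add: E_mult E_C E_X)
  also have "\<dots> = E (adj_mat (C P * X * C Q))"
    using CP X CQ by (simp add: E_adj)
  also have "adj_mat (C P * X * C Q) = C P * adj_mat X * C Q"
    using adj_mat_conjugate_of_det_nonzero[OF CP CQ X _ _ \<open>det X \<noteq> 0\<close>] PQ QP P Q
    by (simp add: C_def const.mat_hom_one flip: const.mat_hom_mult)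
  also have "E \<dots> = P * adj_mat A * Q"
    using CP CQ X adj_mat(1)[OF X] assoc_mult_mat[OF P adj_mat(1)[OF A] Q]
    by (simp add: E_mult E_adj E_C E_X)
  finally show ?thesis .
qed

lemma J_poly_eq_det_append_rows:
  assumes "X \<in> carrier_mat n n" and "i \<le> k" and "k \<le> n"
  shows "J_poly n k i X
    = det (lower_left_block (k - i) k X @\<^sub>r lower_left_block i k (adj_mat X))"
  unfolding J_poly_def using assms adj_mat(1)[OF assms(1)]
  by (intro arg_cong[where f = det] eq_matI)
    (auto simp: append_rows_def lower_left_block_def)

lemma conjugate_intertwines:
  fixes U V B :: "'a::semiring_1 mat"
  assumes "U \<in> carrier_mat n n" "V \<in> carrier_mat n n" "B \<in> carrier_mat n n"
    and "U * V = 1\<^sub>m n"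
  shows "U * (V * B * U) = B * U"
proof -
  have "U * (V * B * U) = U * (V * B) * U"
    using assms by (simp add: assoc_mult_mat[of U n n "V * B" n U n])
  also have "U * (V * B) = U * V * B"
    by (rule assoc_mult_mat[OF assms(1-3), symmetric])
  finally show ?thesis
    using assms(4) left_mult_one_mat[OF assms(3)] by simp
qed

theorem proposition1:
  fixes n k i :: nat and u v A :: "'a::field_char_0 mat"
  assumes "n \<ge> 1" and "1 \<le> k" and "k \<le> n" and "i \<le> k - 1"
    and "u \<in> unitriangular_upper n"
    and "inverts_mat u v" and "inverts_mat v u" and "v \<in> carrier_mat n n"
    and "A \<in> carrier_mat n n"
  shows "rho u v (J_poly n k i) A = J_poly n k i A"
proof -
  note U = \<open>u \<in> unitriangular_upper n\<close> and v = \<open>v \<in> carrier_mat n n\<close>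
    and A = \<open>A \<in> carrier_mat n n\<close>
  have u: "u \<in> carrier_mat n n" using U by (simp add: unitriangular_upper_def)
  have uv: "u * v = 1\<^sub>m n" and vu: "v * u = 1\<^sub>m n"
    using \<open>inverts_mat u v\<close> \<open>inverts_mat v u\<close> u v by (simp_all add: inverts_mat_def)
  have adjA: "adj_mat A \<in> carrier_mat n n" using adj_mat(1)[OF A] .
  have "i \<le> k" using \<open>1 \<le> k\<close> \<open>i \<le> k - 1\<close> by simp
  have "rho u v (J_poly n k i) A
      = det (lower_left_block (k - i) k (v * A * u) @\<^sub>r lower_left_block i k (v * adj_mat A * u))"
    unfolding rho_def adj_mat_conjugate[OF v u A vu uv, symmetric]
    using u v A \<open>i \<le> k\<close> \<open>k \<le> n\<close> by (intro J_poly_eq_det_append_rows) auto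
  also have "\<dots> = det (lower_left_block (k - i) k A @\<^sub>r lower_left_block i k (adj_mat A))"
    by (rule det_append_rows_lower_left_blocks_eq[OF U _ _ A adjA
          conjugate_intertwines[OF u v A uv] conjugate_intertwines[OF u v adjA uv]])
      (use u v A adjA \<open>i \<le> k\<close> \<open>k \<le> n\<close> in auto)
  also have "\<dots> = J_poly n k i A"
    by (rule J_poly_eq_det_append_rows[OF A \<open>i \<le> k\<close> \<open>k \<le> n\<close>, symmetric])
  finally show ?thesis .
qed

end
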